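(* In dimension $d=1$, every Poisson hard sphere process almost surely does not percolate.
   Context: A sphere process is a simple point process $\Lambda$ on $\mathbb{R}^d\times[0,\infty)$; its support is $[\Lambda]=\{(x,r):\Lambda(\{(x,r)\})=1\}$, and $(x,r)\in[\Lambda]$ means there is a sphere (closed ball) of radius $r\ge0$ centred at $x$. The centre process is $\widetilde\Lambda(\cdot)=\Lambda(\cdot\times[0,\infty))$; $\Lambda$ is a Poisson sphere process if $\widetilde\Lambda$ is a homogeneous Poisson process. $\Lambda$ is a hard sphere process if almost surely $|x-y|\ge r+s$ for all distinct $(x,r),(y,s)\in[\Lambda]$. Let $G(\Lambda)=\{y:|y-x|\le r\text{ for some }(x,r)\in[\Lambda]\}$; its connected components are clusters, and $\Lambda$ percolates if some cluster is unbounded. *)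

theory Defs
  imports "HOL-Probability.Probability"
begin

text \<open>Dimension d = 1. A realisation of a simple sphere process is represented by its
support, a set of pairs (x, r) with centre x and radius r \<ge> 0. The number of points
in a set A is counted in the extended nonnegative reals (infinite sets count as \<infinity>).\<close>

definition pcount :: "('b set) \<Rightarrow> 'b set \<Rightarrow> ennreal" where
  "pcount S A = emeasure (count_space UNIV) (S \<inter> A)"

definition sphere_process :: "'w measure \<Rightarrow> ('w \<Rightarrow> (real \<times> real) set) \<Rightarrow> bool" where
  "sphere_process M \<Lambda> \<longleftrightarrow>
     prob_space M \<and>
     (\<forall>\<omega>\<in>space M. \<Lambda> \<omega> \<subseteq> UNIV \<times> {0..}) \<and>
     (\<forall>\<omega>\<in>space M. \<forall>A. bounded A \<longrightarrow> finite (\<Lambda> \<omega> \<inter> A)) \<and>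
     (\<forall>A \<in> sets borel. (\<lambda>\<omega>. pcount (\<Lambda> \<omega>) A) \<in> borel_measurable M)"

definition centre_count :: "(real \<times> real) set \<Rightarrow> real set \<Rightarrow> ennreal" where
  "centre_count S B = pcount S (B \<times> {0..})"

definition homogeneous_poisson :: "'w measure \<Rightarrow> real \<Rightarrow> (real set \<Rightarrow> 'w \<Rightarrow> ennreal) \<Rightarrow> bool" where
  "homogeneous_poisson M lam N \<longleftrightarrow>
     prob_space M \<and> lam > 0 \<and>
     (\<forall>B \<in> sets borel. bounded B \<longrightarrow>
        N B \<in> borel_measurable M \<and>
        (\<forall>k::nat. measure M {\<omega> \<in> space M. N B \<omega> = of_nat k} =
            (lam * measure lborel B) ^ k / fact k * exp (- (lam * measure lborel B)))) \<and>
     (\<forall>(I::nat set) Bs. finite I \<longrightarrow> (\<forall>i\<in>I. Bs i \<in> sets borel \<and> bounded (Bs i)) \<longrightarrow>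
        disjoint_family_on Bs I \<longrightarrow>
        prob_space.indep_vars M (\<lambda>_. borel) (\<lambda>i. N (Bs i)) I)"

definition poisson_sphere_process :: "'w measure \<Rightarrow> ('w \<Rightarrow> (real \<times> real) set) \<Rightarrow> bool" where
  "poisson_sphere_process M \<Lambda> \<longleftrightarrow> sphere_process M \<Lambda> \<and>
     (\<exists>lam. homogeneous_poisson M lam (\<lambda>B \<omega>. centre_count (\<Lambda> \<omega>) B))"

definition hard_sphere_process :: "'w measure \<Rightarrow> ('w \<Rightarrow> (real \<times> real) set) \<Rightarrow> bool" where
  "hard_sphere_process M \<Lambda> \<longleftrightarrow> sphere_process M \<Lambda> \<and>
     (AE \<omega> in M. \<forall>x r y s. (x, r) \<in> \<Lambda> \<omega> \<longrightarrow> (y, s) \<in> \<Lambda> \<omega> \<longrightarrow> (x, r) \<noteq> (y, s) \<longrightarrow>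
        r + s \<le> \<bar>x - y\<bar>)"

definition occupied :: "(real \<times> real) set \<Rightarrow> real set" where
  "occupied S = {y. \<exists>(x, r) \<in> S. \<bar>y - x\<bar> \<le> r}"

definition percolates :: "(real \<times> real) set \<Rightarrow> bool" where
  "percolates S \<longleftrightarrow> (\<exists>y \<in> occupied S. \<not> bounded (connected_component_set (occupied S) y))"

end

theory Submission
  imports Defs
begin

(* A gap at a is the configuration of exactly two centres in [a, a+1), none in [a+1, a+5) and two
   in [a+5, a+6). In a hard sphere configuration it leaves a+3 uncovered: a ball reaching a+3 from
   the left has its centre below a+1, and the other centre in [a, a+1) is closer to that centre
   than a+3 is, which the hard-core condition forbids (symmetrically from the right). For a Poisson
   centre process, gaps at the positions 6k (and at -6k) are independent events of one fixed
   positive probability, so by the second Borel-Cantelli lemma there are almost surely uncovered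
   points arbitrarily far out in both directions, and every cluster is bounded. *)

definition hard_core :: "(real \<times> real) set \<Rightarrow> bool" where
  "hard_core S \<longleftrightarrow>
     (\<forall>x r y s. (x, r) \<in> S \<longrightarrow> (y, s) \<in> S \<longrightarrow> (x, r) \<noteq> (y, s) \<longrightarrow> r + s \<le> \<bar>x - y\<bar>)"

definition gap_block :: "real \<Rightarrow> nat \<Rightarrow> real set" where
  "gap_block a t = (if t = 0 then {a..<a+1} else if t = 1 then {a+1..<a+5} else {a+5..<a+6})"

definition gap :: "(real set \<Rightarrow> ennreal) \<Rightarrow> real \<Rightarrow> bool" where
  "gap N a \<longleftrightarrow> N (gap_block a 0) = 2 \<and> N (gap_block a 1) = 0 \<and> N (gap_block a 2) = 2"

lemma gap_block_subset: "gap_block a t \<subseteq> {a..<a+6}"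
  by (auto simp: gap_block_def)

lemma gap_block_disjoint: "t < 3 \<Longrightarrow> t' < 3 \<Longrightarrow> t \<noteq> t' \<Longrightarrow> gap_block a t \<inter> gap_block a t' = {}"
  by (auto simp: gap_block_def)

lemma gap_block_borel: "gap_block a t \<in> sets borel"
  by (simp add: gap_block_def)

lemma bounded_gap_block: "bounded (gap_block a t)"
  by (simp add: gap_block_def)

lemma pcount_eq_0_iff: "pcount S A = 0 \<longleftrightarrow> S \<inter> A = {}"
  by (simp add: pcount_def emeasure_count_space_eq_0)

lemma pcount_eq_2_obtain_other:
  assumes "pcount S A = 2"
  obtains q where "q \<in> S \<inter> A" "q \<noteq> p"
proof -
  have "finite (S \<inter> A)"
    using assms by (auto simp: pcount_def emeasure_count_space split: if_splits)
  then have "card (S \<inter> A) = 2"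
    using assms by (simp add: pcount_def)
  then show thesis
    using that by (metis card_2_iff insertI1 insertI2)
qed

lemma hard_core_radius_le_dist:
  assumes "hard_core S" "S \<subseteq> UNIV \<times> {0..}" "(x, r) \<in> S" "(y, s) \<in> S" "(x, r) \<noteq> (y, s)"
  shows "r \<le> \<bar>x - y\<bar>"
proof -
  have "r + s \<le> \<bar>x - y\<bar>"
    using assms(1,3-5) unfolding hard_core_def by blast
  moreover have "0 \<le> s"
    using assms(2,4) by auto
  ultimately show ?thesis by linarith
qed

lemma gap_uncovered:
  assumes hard: "hard_core S" and nonneg: "S \<subseteq> UNIV \<times> {0..}"
    and "gap (centre_count S) a"
  shows "a + 3 \<notin> occupied S"
proof
  assume "a + 3 \<in> occupied S"
  then obtain x r where xr: "(x, r) \<in> S" and covers: "\<bar>a + 3 - x\<bar> \<le> r"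
    unfolding occupied_def by auto
  have left: "pcount S ({a..<a+1} \<times> {0..}) = 2"
    and empty: "S \<inter> ({a+1..<a+5} \<times> {0..}) = {}"
    and right: "pcount S ({a+5..<a+6} \<times> {0..}) = 2"
    using \<open>gap (centre_count S) a\<close> by (simp_all add: gap_def gap_block_def centre_count_def pcount_eq_0_iff)
  have "(x, r) \<notin> {a+1..<a+5} \<times> {0..}"
    using xr empty by blast
  moreover have "0 \<le> r"
    using xr nonneg by auto
  ultimately have "x < a + 1 \<or> a + 5 \<le> x"
    by auto
  then obtain y s where ys: "(y, s) \<in> S" "(y, s) \<noteq> (x, r)" and nearer: "\<bar>x - y\<bar> < \<bar>a + 3 - x\<bar>"
  proof
    assume "x < a + 1"
    obtain q where "q \<in> S \<inter> ({a..<a+1} \<times> {0..})" "q \<noteq> (x, r)"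
      using pcount_eq_2_obtain_other[OF left] .
    then obtain y s where "(y, s) \<in> S" "(y, s) \<noteq> (x, r)" "a \<le> y" "y < a + 1"
      by (cases q) auto
    with \<open>x < a + 1\<close> show thesis
      by (intro that) (auto simp: abs_if)
  next
    assume "a + 5 \<le> x"
    obtain q where "q \<in> S \<inter> ({a+5..<a+6} \<times> {0..})" "q \<noteq> (x, r)"
      using pcount_eq_2_obtain_other[OF right] .
    then obtain y s where "(y, s) \<in> S" "(y, s) \<noteq> (x, r)" "a + 5 \<le> y" "y < a + 6"
      by (cases q) auto
    with \<open>a + 5 \<le> x\<close> show thesis
      by (intro that) (auto simp: abs_if)
  qed
  have "r \<le> \<bar>x - y\<bar>"
    using hard_core_radius_le_dist[OF hard nonneg xr ys(1)] ys(2) by auto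
  with covers nearer show False by linarith
qed

lemma bounded_connected_component_if_gaps:
  fixes U :: "real set"
  assumes above: "\<And>y. \<exists>z\<ge>y. z \<notin> U" and below: "\<And>y. \<exists>z\<le>y. z \<notin> U"
  shows "bounded (connected_component_set U y)"
proof (cases "y \<in> U")
  case False
  then have "connected_component_set U y = {}"
    using connected_component_eq_empty by blast
  then show ?thesis
    by (simp only: bounded_empty)
next
  case True
  let ?C = "connected_component_set U y"
  obtain z1 where "y \<le> z1" "z1 \<notin> U"
    using above[of y] by blast
  obtain z0 where "z0 \<le> y" "z0 \<notin> U"
    using below[of y] by blast
  have outside: "z0 \<notin> ?C" "z1 \<notin> ?C"
    using connected_component_subset[of U y] \<open>z0 \<notin> U\<close> \<open>z1 \<notin> U\<close> by blast+
  have y: "y \<in> ?C"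
    using True by simp
  have between: "w \<in> ?C" if "u \<in> ?C" "v \<in> ?C" "u \<le> w" "w \<le> v" for u v w
    using that is_interval_connected_1[of ?C] unfolding is_interval_1 by blast
  have "?C \<subseteq> {z0..z1}"
  proof
    fix c assume c: "c \<in> ?C"
    have "c \<le> z1"
    proof (rule ccontr)
      assume "\<not> c \<le> z1"
      then show False
        using between[OF y c, of z1] \<open>y \<le> z1\<close> outside by simp
    qed
    moreover have "z0 \<le> c"
    proof (rule ccontr)
      assume "\<not> z0 \<le> c"
      then show False
        using between[OF c y, of z0] \<open>z0 \<le> y\<close> outside by simp
    qed
    ultimately show "c \<in> {z0..z1}"
      by simp
  qed
  then show ?thesis
    using bounded_subset bounded_closed_interval by blast
qed

lemma not_percolates_if_gaps:
  assumes hard: "hard_core S" and nonneg: "S \<subseteq> UNIV \<times> {0..}"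
    and up: "\<exists>\<^sub>F k in sequentially. gap (centre_count S) (6 * real k)"
    and down: "\<exists>\<^sub>F k in sequentially. gap (centre_count S) (- 6 * real k)"
  shows "\<not> percolates S"
proof -
  have "\<exists>z\<ge>y. z \<notin> occupied S" for y
  proof -
    obtain k where k: "nat \<lceil>y\<rceil> \<le> k" and gap_k: "gap (centre_count S) (6 * real k)"
      using up unfolding frequently_sequentially by blast
    have "6 * real k + 3 \<notin> occupied S"
      using gap_uncovered[OF hard nonneg gap_k] .
    moreover have "y \<le> 6 * real k + 3"
      using k by linarith
    ultimately show ?thesis by blast
  qed
  moreover have "\<exists>z\<le>y. z \<notin> occupied S" for y
  proof -
    obtain k where k: "nat \<lceil>3 - y\<rceil> \<le> k" and gap_k: "gap (centre_count S) (- 6 * real k)"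
      using down unfolding frequently_sequentially by blast
    have "- 6 * real k + 3 \<notin> occupied S"
      using gap_uncovered[OF hard nonneg gap_k] .
    moreover have "- 6 * real k + 3 \<le> y"
      using k by linarith
    ultimately show ?thesis by blast
  qed
  ultimately show ?thesis
    unfolding percolates_def using bounded_connected_component_if_gaps by blast
qed

lemma (in prob_space) indep_vars_if_finite_subsets:
  assumes "\<And>J. J \<subseteq> I \<Longrightarrow> finite J \<Longrightarrow> indep_vars M' X J"
  shows "indep_vars M' X I"
proof -
  have "random_variable (M' i) (X i)" if "i \<in> I" for i
    using assms[of "{i}"] that by (auto simp: indep_vars_def)
  moreover have "indep_sets (\<lambda>i. sigma_sets (space M) {X i -` A \<inter> space M |A. A \<in> sets (M' i)}) I"
    by (subst indep_sets_finite_index_sets) (use assms in \<open>auto simp: indep_vars_def\<close>)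
  ultimately show ?thesis
    unfolding indep_vars_def by blast
qed

(* Events are passed as boolean random variables, so that their independence covers the
   complements, which is what the product estimate below needs. *)
lemma (in prob_space) AE_frequently_if_indep:
  fixes P :: "nat \<Rightarrow> 'a \<Rightarrow> bool"
  assumes indep: "indep_vars (\<lambda>_. count_space UNIV) P UNIV"
    and "0 < c" and prob_ge: "\<And>n. c \<le> prob {x \<in> space M. P n x}"
  shows "AE x in M. \<exists>\<^sub>F n in sequentially. P n x"
proof -
  have [measurable]: "P n \<in> measurable M (count_space UNIV)" for n
    using indep by (auto simp: indep_vars_def)
  have "c \<le> 1"
    using prob_ge[of 0] prob_le_1 order_trans by blast
  have misses_window: "prob {x \<in> space M. \<forall>n\<in>{m..m+K}. \<not> P n x} \<le> (1 - c) ^ Suc K" for m K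
  proof -
    have "{x \<in> space M. \<forall>n\<in>{m..m+K}. \<not> P n x} = (\<Inter>n\<in>{m..m+K}. P n -` {False} \<inter> space M)"
      by auto
    then have "prob {x \<in> space M. \<forall>n\<in>{m..m+K}. \<not> P n x} =
        (\<Prod>n\<in>{m..m+K}. prob (P n -` {False} \<inter> space M))"
      using indep_varsD[OF indep, of "{m..m+K}" "\<lambda>_. {False}"] by simp
    also have "\<dots> = (\<Prod>n\<in>{m..m+K}. 1 - prob {x \<in> space M. P n x})"
    proof (rule prod.cong)
      fix n
      have "P n -` {False} \<inter> space M = space M - {x \<in> space M. P n x}"
        by auto
      then show "prob (P n -` {False} \<inter> space M) = 1 - prob {x \<in> space M. P n x}"
        by (simp add: prob_compl)
    qed simp
    also have "\<dots> \<le> (\<Prod>n\<in>{m..m+K}. 1 - c)"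
      using prob_ge by (intro prod_mono) auto
    finally show ?thesis
      by simp
  qed
  have "prob {x \<in> space M. \<forall>n\<ge>m. \<not> P n x} = 0" for m
  proof -
    have "prob {x \<in> space M. \<forall>n\<ge>m. \<not> P n x} \<le> (1 - c) ^ Suc K" for K
      by (rule order_trans[OF finite_measure_mono misses_window]) auto
    moreover have "(\<lambda>K. (1 - c) ^ Suc K) \<longlonglongrightarrow> 0"
      using \<open>0 < c\<close> \<open>c \<le> 1\<close> by (intro LIMSEQ_power_zero[THEN LIMSEQ_Suc]) simp
    ultimately have "prob {x \<in> space M. \<forall>n\<ge>m. \<not> P n x} \<le> 0"
      by (intro LIMSEQ_le_const) auto
    then show ?thesis
      using measure_nonneg antisym by blast
  qed
  then have "AE x in M. \<exists>n\<ge>m. P n x" for m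
    by (subst (asm) prob_Collect_eq_0) auto
  then show ?thesis
    by (simp add: frequently_sequentially AE_all_countable)
qed

lemma homogeneous_poisson_prob_space: "homogeneous_poisson M lam N \<Longrightarrow> prob_space M"
  by (simp add: homogeneous_poisson_def)

lemma homogeneous_poisson_intensity_pos: "homogeneous_poisson M lam N \<Longrightarrow> 0 < lam"
  by (simp add: homogeneous_poisson_def)

lemma homogeneous_poisson_prob_count:
  assumes "homogeneous_poisson M lam N" "B \<in> sets borel" "bounded B"
  shows "measure M {\<omega> \<in> space M. N B \<omega> = of_nat k} =
    (lam * measure lborel B) ^ k / fact k * exp (- (lam * measure lborel B))"
  using assms by (simp add: homogeneous_poisson_def)

lemma homogeneous_poisson_indep_counts:
  fixes I :: "nat set"
  assumes "homogeneous_poisson M lam N" "finite I"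
    and "\<And>i. i \<in> I \<Longrightarrow> Bs i \<in> sets borel" "\<And>i. i \<in> I \<Longrightarrow> bounded (Bs i)"
    and "disjoint_family_on Bs I"
  shows "prob_space.indep_vars M (\<lambda>_. borel) (\<lambda>i. N (Bs i)) I"
  using assms unfolding homogeneous_poisson_def by blast

lemma homogeneous_poisson_prob_gap:
  assumes hp: "homogeneous_poisson M lam N"
  shows "measure M {\<omega> \<in> space M. gap (\<lambda>B. N B \<omega>) a} = (lam\<^sup>2 / 2)\<^sup>2 * exp (- 6 * lam)"
proof -
  interpret prob_space M
    using homogeneous_poisson_prob_space[OF hp] .
  define count :: "nat \<Rightarrow> nat" where "count t = (if t = 1 then 0 else 2)" for t
  have indep: "indep_vars (\<lambda>_. borel) (\<lambda>t. N (gap_block a t)) {0, 1, 2}"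
    by (rule homogeneous_poisson_indep_counts[OF hp])
      (auto simp: gap_block_borel bounded_gap_block disjoint_family_on_def gap_block_disjoint)
  have poisson: "prob {\<omega> \<in> space M. N (gap_block a t) \<omega> = of_nat k} =
      (lam * measure lborel (gap_block a t)) ^ k / fact k * exp (- (lam * measure lborel (gap_block a t)))"
    for t k
    using homogeneous_poisson_prob_count[OF hp gap_block_borel bounded_gap_block] .
  have "{\<omega> \<in> space M. gap (\<lambda>B. N B \<omega>) a} =
      (\<Inter>t\<in>{0, 1, 2}. N (gap_block a t) -` {of_nat (count t)} \<inter> space M)"
    by (auto simp: gap_def count_def)
  also have "prob \<dots> = (\<Prod>t\<in>{0, 1, 2}. prob (N (gap_block a t) -` {of_nat (count t)} \<inter> space M))"
    by (rule indep_varsD_finite[OF indep]) auto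
  also have "\<dots> = (lam\<^sup>2 / 2 * exp (- lam)) * exp (- (4 * lam)) * (lam\<^sup>2 / 2 * exp (- lam))"
  proof -
    have block_probs:
      "prob {\<omega> \<in> space M. N (gap_block a 0) \<omega> = 2} = lam\<^sup>2 / 2 * exp (- lam)"
      "prob {\<omega> \<in> space M. N (gap_block a 1) \<omega> = 0} = exp (- (4 * lam))"
      "prob {\<omega> \<in> space M. N (gap_block a 2) \<omega> = 2} = lam\<^sup>2 / 2 * exp (- lam)"
      using poisson[of 0 2] poisson[of 1 0] poisson[of 2 2] by (simp_all add: gap_block_def mult.commute)
    show ?thesis
      by (simp add: vimage_def Int_def conj_commute count_def block_probs del: One_nat_def)
  qed
  also have "\<dots> = (lam\<^sup>2 / 2)\<^sup>2 * exp (- 6 * lam)"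
    by (simp add: power2_eq_square exp_add[symmetric])
  finally show ?thesis .
qed

lemma homogeneous_poisson_indep_gaps:
  fixes pos :: "nat \<Rightarrow> real"
  assumes hp: "homogeneous_poisson M lam N"
    and separated: "\<And>j k. j \<noteq> k \<Longrightarrow> 6 \<le> \<bar>pos j - pos k\<bar>"
  shows "prob_space.indep_vars M (\<lambda>_. count_space UNIV) (\<lambda>k \<omega>. gap (\<lambda>B. N B \<omega>) (pos k)) UNIV"
proof -
  interpret prob_space M
    using homogeneous_poisson_prob_space[OF hp] .
  (* homogeneous_poisson only provides independence for nat-indexed families of sets, so the
     three blocks of the gap at pos k are enumerated as 3k, 3k+1, 3k+2. *)
  define block where "block i = gap_block (pos (i div 3)) (i mod 3)" for i
  define triple where "triple k = {3 * k, 3 * k + 1, 3 * k + 2}" for k :: nat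
  have disjoint: "disjoint_family block"
    unfolding disjoint_family_on_def
  proof (intro ballI impI)
    fix i j :: nat
    assume "i \<noteq> j"
    show "block i \<inter> block j = {}"
    proof (cases "i div 3 = j div 3")
      case True
      then have "i mod 3 \<noteq> j mod 3"
        using \<open>i \<noteq> j\<close> by (metis div_mod_decomp)
      then show ?thesis
        unfolding block_def True by (intro gap_block_disjoint) auto
    next
      case False
      then have "6 \<le> \<bar>pos (i div 3) - pos (j div 3)\<bar>"
        by (rule separated)
      then have "pos (i div 3) + 6 \<le> pos (j div 3) \<or> pos (j div 3) + 6 \<le> pos (i div 3)"
        by arith
      then have "{pos (i div 3)..<pos (i div 3) + 6} \<inter> {pos (j div 3)..<pos (j div 3) + 6} = {}"
        by auto
      then show ?thesis
        unfolding block_def using gap_block_subset by blast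
    qed
  qed
  have "indep_vars (\<lambda>_. borel) (\<lambda>i. N (block i)) UNIV"
  proof (rule indep_vars_if_finite_subsets)
    fix J :: "nat set"
    assume "finite J"
    show "indep_vars (\<lambda>_. borel) (\<lambda>i. N (block i)) J"
      using homogeneous_poisson_indep_counts[OF hp \<open>finite J\<close> _ _ disjoint_family_on_mono[OF subset_UNIV disjoint]]
      by (simp add: block_def gap_block_borel bounded_gap_block)
  qed
  then have "indep_vars (\<lambda>k. PiM (triple k) (\<lambda>_. borel)) (\<lambda>k \<omega>. restrict (\<lambda>i. N (block i) \<omega>) (triple k)) UNIV"
    by (rule indep_vars_restrict) (auto simp: triple_def disjoint_family_on_def)
  then have "indep_vars (\<lambda>_. count_space UNIV)
      (\<lambda>k \<omega>. restrict (\<lambda>i. N (block i) \<omega>) (triple k) (3 * k) = 2 \<and>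
               restrict (\<lambda>i. N (block i) \<omega>) (triple k) (3 * k + 1) = 0 \<and>
               restrict (\<lambda>i. N (block i) \<omega>) (triple k) (3 * k + 2) = 2) UNIV"
    by (rule indep_vars_compose2[where Y = "\<lambda>k f. f (3 * k) = 2 \<and> f (3 * k + 1) = 0 \<and> f (3 * k + 2) = 2"])
      (measurable, auto simp: triple_def)
  moreover have "Suc (3 * k) div 3 = k" "Suc (Suc (3 * k)) div 3 = k" "Suc (Suc (3 * k)) mod 3 = 2" for k :: nat
    by presburger+
  ultimately show ?thesis
    by (simp add: triple_def block_def gap_def)
qed

lemma homogeneous_poisson_AE_frequently_gap:
  fixes pos :: "nat \<Rightarrow> real"
  assumes hp: "homogeneous_poisson M lam N"
    and separated: "\<And>j k. j \<noteq> k \<Longrightarrow> 6 \<le> \<bar>pos j - pos k\<bar>"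
  shows "AE \<omega> in M. \<exists>\<^sub>F k in sequentially. gap (\<lambda>B. N B \<omega>) (pos k)"
proof -
  interpret prob_space M
    using homogeneous_poisson_prob_space[OF hp] .
  show ?thesis
    using homogeneous_poisson_indep_gaps[OF hp separated]
  proof (rule AE_frequently_if_indep)
    show "0 < (lam\<^sup>2 / 2)\<^sup>2 * exp (- 6 * lam)"
      using homogeneous_poisson_intensity_pos[OF hp] by simp
    show "(lam\<^sup>2 / 2)\<^sup>2 * exp (- 6 * lam) \<le> prob {\<omega> \<in> space M. gap (\<lambda>B. N B \<omega>) (pos k)}" for k
      using homogeneous_poisson_prob_gap[OF hp] by simp
  qed
qed

theorem mainTheorem4:
  fixes M :: "'w measure" and \<Lambda> :: "'w \<Rightarrow> (real \<times> real) set"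
  assumes "poisson_sphere_process M \<Lambda>"
    and "hard_sphere_process M \<Lambda>"
  shows "AE \<omega> in M. \<not> percolates (\<Lambda> \<omega>)"
proof -
  obtain lam where "sphere_process M \<Lambda>"
    and hp: "homogeneous_poisson M lam (\<lambda>B \<omega>. centre_count (\<Lambda> \<omega>) B)"
    using assms(1) unfolding poisson_sphere_process_def by blast
  then have nonneg: "\<forall>\<omega>\<in>space M. \<Lambda> \<omega> \<subseteq> UNIV \<times> {0..}"
    unfolding sphere_process_def by blast
  have hard: "AE \<omega> in M. hard_core (\<Lambda> \<omega>)"
    using assms(2) unfolding hard_sphere_process_def hard_core_def by blast
  have separated: "6 \<le> \<bar>6 * real j - 6 * real k\<bar>" "6 \<le> \<bar>- 6 * real j - - 6 * real k\<bar>"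
    if "j \<noteq> k" for j k
    using that by (cases j k rule: linorder_cases; simp)+
  have up: "AE \<omega> in M. \<exists>\<^sub>F k in sequentially. gap (centre_count (\<Lambda> \<omega>)) (6 * real k)"
    by (rule homogeneous_poisson_AE_frequently_gap[OF hp separated(1)])
  have down: "AE \<omega> in M. \<exists>\<^sub>F k in sequentially. gap (centre_count (\<Lambda> \<omega>)) (- 6 * real k)"
    by (rule homogeneous_poisson_AE_frequently_gap[OF hp separated(2)])
  show ?thesis
    using AE_space hard up down
    by eventually_elim (use nonneg not_percolates_if_gaps in blast)
qed

end
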